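(* Let $b\ge 2$, $s,m\in\mathbb{N}$, let $C_1,\dots,C_s\in\mathbb{Z}_b^{\mathbb{N}\times m}$ and let $\mathcal{P}\subset G^s$ be the digital net with generating matrices $C_1,\dots,C_s$. Let $\mathcal{P}_{\Phi_b}:=\{\Phi_b(\boldsymbol z):\boldsymbol z\in\mathcal{P}\}$ be its folded digital net. Then $\mathcal{P}_{\Phi_b}$ is again a digital net in $G^s$, and its dual net satisfies $$\mathcal{P}_{\Phi_b}^{\perp}=\{\lfloor \boldsymbol k/b\rfloor:\ \boldsymbol k\in \mathcal{E}_0^s\cap \mathcal{P}^{\perp}\},$$ where $\lfloor \boldsymbol k/b\rfloor=(\lfloor k_1/b\rfloor,\dots,\lfloor k_s/b\rfloor)$ for $\boldsymbol k=(k_1,\dots,k_s)$.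
   Context: $b\ge 2$ is an integer, $\mathbb{Z}_b=\{0,\dots,b-1\}$ with addition mod $b$, and $G:=\prod_{i=1}^\infty\mathbb{Z}_b$ (infinite sequences $(\zeta_1,\zeta_2,\dots)^\top$ with coordinatewise addition mod $b$). A digital net in $G^s$ with generating matrices $C_1,\dots,C_s\in\mathbb{Z}_b^{\mathbb{N}\times m}$ (infinite-row matrices with $m$ columns; columns may have infinitely many nonzero entries) is $\mathcal{P}=\{\boldsymbol z_0,\dots,\boldsymbol z_{b^m-1}\}$, where for $0\le h<b^m$ with $b$-adic expansion $h=\sum_{i=0}^{m-1}\eta_ib^i$, $\boldsymbol z_h=(z_{h,1},\dots,z_{h,s})$ with $z_{h,j}=C_j(\eta_0,\dots,\eta_{m-1})^\top\in G$ (arithmetic mod $b$). Its dual net is $\mathcal{P}^\perp=\{\boldsymbol k\in\mathbb{N}_0^s: C_1^\top\vec k_1+\dots+C_s^\top\vec k_s=\boldsymbol 0\in\mathbb{Z}_b^m\}$, where for $k_j=\kappa_{0,j}+\kappa_{1,j}b+\cdots$ (finite $b$-adic expansion) $\vec k_j=(\kappa_{0,j},\kappa_{1,j},\dots)^\top$. The $b$-adic tent transformation $\Phi_b:G\to G$ is $\Phi_b((\zeta_1,\zeta_2,\dots)^\top)=(\eta_1,\eta_2,\dots)^\top$ with $\eta_i=\zeta_{i+1}-\zeta_1 \pmod b$, applied coordinatewise on $G^s$. For $k\in\mathbb{N}$ with $b$-adic digits $\kappa_0,\kappa_1,\dots$, $\delta(k)=\kappa_0+\kappa_1+\cdots$;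 $\mathcal{E}:=\{k\in\mathbb{N}:\delta(k)\equiv 0\pmod b\}$ and $\mathcal{E}_0:=\mathcal{E}\cup\{0\}$. *)

theory Defs
  imports Main
begin

text \<open>An element of G is a sequence z :: nat => nat with values in {0..<b},
  0-indexed: z i is the paper's zeta_(i+1). A generating matrix family is
  C :: nat => nat => nat => nat, where C j i r is the entry in row i (0-indexed, i.e. paper row i+1)
  and column r (0 <= r < m) of the matrix C_(j+1), for 0 <= j < s.
  Vectors in N_0^s are lists of length s.\<close>

definition digit :: "nat \<Rightarrow> nat \<Rightarrow> nat \<Rightarrow> nat" where
  "digit b k i = (k div b ^ i) mod b"

definition delta :: "nat \<Rightarrow> nat \<Rightarrow> nat" where
  "delta b k = (\<Sum>i | digit b k i \<noteq> 0. digit b k i)"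

definition Eset :: "nat \<Rightarrow> nat set" where
  "Eset b = {k. k \<ge> 1 \<and> delta b k mod b = 0}"

definition Eset0 :: "nat \<Rightarrow> nat set" where
  "Eset0 b = insert 0 (Eset b)"

text \<open>The point z_h of the digital net: coordinate j, digit i.\<close>
definition net_point :: "nat \<Rightarrow> nat \<Rightarrow> (nat \<Rightarrow> nat \<Rightarrow> nat \<Rightarrow> nat) \<Rightarrow> nat \<Rightarrow> nat \<Rightarrow> nat \<Rightarrow> nat" where
  "net_point b m C h j i = (\<Sum>r<m. C j i r * digit b h r) mod b"

definition tent :: "nat \<Rightarrow> (nat \<Rightarrow> nat) \<Rightarrow> nat \<Rightarrow> nat" where
  "tent b z i = nat ((int (z (Suc i)) - int (z 0)) mod int b)"

definition dual_net :: "nat \<Rightarrow> nat \<Rightarrow> nat \<Rightarrow> (nat \<Rightarrow> nat \<Rightarrow> nat \<Rightarrow> nat) \<Rightarrow> nat list set" where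
  "dual_net b m s C = {k. length k = s \<and>
     (\<forall>r<m. (\<Sum>j<s. \<Sum>i | digit b (k ! j) i \<noteq> 0. C j i r * digit b (k ! j) i) mod b = 0)}"

end

theory Submission
  imports Defs
begin

text \<open>Folding replaces row i of C_j by row i+1 minus row 0, so the folded net is the digital net
  with these difference matrices. Writing k = b k' + c with c < b, the dual pairing of k against C
  equals the pairing of k' against the folded matrices plus (c + delta k') times row 0 of C. Since
  delta k = c + delta k', the extra term vanishes mod b exactly when k lies in E_0.\<close>

lemma digit_eq_0_of_less_power:
  assumes "0 < b" "k < b ^ N" "N \<le> i"
  shows "digit b k i = 0"
proof -
  have "b ^ N \<le> b ^ i" using assms by (simp add: power_increasing)
  then have "k < b ^ i" using assms by linarith
  then show ?thesis by (simp add: digit_def)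
qed

lemma less_power_self: "1 < b \<Longrightarrow> k < (b::nat) ^ k"
  using less_exp[of k] power_mono[of 2 b k] by linarith

lemma digit_sum_eq_sum_lessThan:
  assumes "0 < b" "k < b ^ N"
  shows "(\<Sum>i | digit b k i \<noteq> 0. g i * digit b k i) = (\<Sum>i<N. g i * digit b k i)"
proof (rule sum.mono_neutral_left)
  show "{i. digit b k i \<noteq> 0} \<subseteq> {..<N}"
  proof
    fix i assume "i \<in> {i. digit b k i \<noteq> 0}"
    then show "i \<in> {..<N}" using digit_eq_0_of_less_power[OF assms, of i] by (cases "i < N") auto
  qed
qed auto

lemma digit_mult_add_0: "0 < b \<Longrightarrow> c < b \<Longrightarrow> digit b (b * k + c) 0 = c"
  by (simp add: digit_def)

lemma digit_mult_add_Suc: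
  assumes "0 < b" "c < b"
  shows "digit b (b * k + c) (Suc i) = digit b k i"
proof -
  have "(b * k + c) div b = k" using assms by simp
  then show ?thesis by (simp add: digit_def div_mult2_eq)
qed

lemma digit_sum_mult_add:
  assumes "1 < b" "c < b"
  shows "(\<Sum>i | digit b (b * k + c) i \<noteq> 0. g i * digit b (b * k + c) i)
       = g 0 * c + (\<Sum>i | digit b k i \<noteq> 0. g (Suc i) * digit b k i)"
proof -
  have k: "k < b ^ k" using less_power_self[OF assms(1)] .
  have "b * k + c < b * (k + 1)" using assms by simp
  also have "\<dots> \<le> b * b ^ k" using k by (intro mult_le_mono2) simp
  also have "\<dots> = b ^ Suc k" by simp
  finally have "b * k + c < b ^ Suc k" .
  then have "(\<Sum>i | digit b (b * k + c) i \<noteq> 0. g i * digit b (b * k + c) i)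
      = (\<Sum>i<Suc k. g i * digit b (b * k + c) i)"
    using assms by (intro digit_sum_eq_sum_lessThan) auto
  also have "\<dots> = g 0 * c + (\<Sum>i<k. g (Suc i) * digit b k i)"
    using assms by (simp add: sum.lessThan_Suc_shift digit_mult_add_0 digit_mult_add_Suc
        del: sum.lessThan_Suc)
  also have "(\<Sum>i<k. g (Suc i) * digit b k i) = (\<Sum>i | digit b k i \<noteq> 0. g (Suc i) * digit b k i)"
    using assms k by (intro digit_sum_eq_sum_lessThan[symmetric]) auto
  finally show ?thesis .
qed

lemma delta_mult_add: "1 < b \<Longrightarrow> c < b \<Longrightarrow> delta b (b * k + c) = c + delta b k"
  using digit_sum_mult_add[of b c "\<lambda>_. 1" k] by (simp add: delta_def)

lemma delta_0 [simp]: "delta b 0 = 0"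
  by (simp add: delta_def digit_def)

lemma mem_Eset0_iff: "k \<in> Eset0 b \<longleftrightarrow> b dvd delta b k"
  unfolding Eset0_def Eset_def dvd_eq_mod_eq_0 by (cases "k = 0") simp_all

definition tent_matrix :: "nat \<Rightarrow> (nat \<Rightarrow> nat \<Rightarrow> nat \<Rightarrow> nat) \<Rightarrow> nat \<Rightarrow> nat \<Rightarrow> nat \<Rightarrow> nat" where
  "tent_matrix b C j i r = nat ((int (C j (Suc i) r) - int (C j 0 r)) mod int b)"

lemma tent_matrix_less: "0 < b \<Longrightarrow> tent_matrix b C j i r < b"
  by (simp add: tent_matrix_def nat_less_iff)

lemma tent_matrix_dvd:
  "0 < b \<Longrightarrow> int b dvd int (tent_matrix b C j i r) - (int (C j (Suc i) r) - int (C j 0 r))"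
  by (simp add: tent_matrix_def mod_eq_dvd_iff[symmetric])

lemma net_point_tent_matrix:
  assumes "0 < b"
  shows "tent b (net_point b m C h j) = net_point b m (tent_matrix b C) h j"
proof
  fix i
  let ?S1 = "\<Sum>r<m. C j (Suc i) r * digit b h r"
  let ?S0 = "\<Sum>r<m. C j 0 r * digit b h r"
  let ?T = "\<Sum>r<m. tent_matrix b C j i r * digit b h r"
  have "int ?T - (int ?S1 - int ?S0)
     = (\<Sum>r<m. (int (tent_matrix b C j i r) - (int (C j (Suc i) r) - int (C j 0 r)))
                * int (digit b h r))"
    by (simp add: of_nat_sum sum_subtractf sum.distrib algebra_simps)
  also have "int b dvd \<dots>"
    using assms by (intro dvd_sum dvd_mult2 tent_matrix_dvd)
  finally have "int (?T mod b) = (int (?S1 mod b) - int (?S0 mod b)) mod int b"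
    by (simp add: mod_eq_dvd_iff of_nat_mod mod_diff_eq)
  then show "tent b (net_point b m C h j) i = net_point b m (tent_matrix b C) h j i"
    unfolding tent_def net_point_def by (metis nat_int)
qed

abbreviation dual_pairing :: "nat \<Rightarrow> (nat \<Rightarrow> nat \<Rightarrow> nat \<Rightarrow> nat) \<Rightarrow> nat \<Rightarrow> nat \<Rightarrow> nat \<Rightarrow> nat" where
  "dual_pairing b C j k r \<equiv> \<Sum>i | digit b k i \<noteq> 0. C j i r * digit b k i"

lemma dual_pairing_tent_matrix:
  assumes "1 < b" "k \<in> Eset0 b"
  shows "dual_pairing b (tent_matrix b C) j (k div b) r mod b = dual_pairing b C j k r mod b"
proof -
  define c where "c = k mod b"
  define k' where "k' = k div b"
  have c: "c < b" and k: "k = b * k' + c" using assms(1) by (auto simp: c_def k'_def)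
  have "b dvd c + delta b k'"
    using assms delta_mult_add[OF assms(1) c, of k'] by (simp add: k mem_Eset0_iff)
  then have row0: "int b dvd int (C j 0 r) * (int c + int (delta b k'))"
    by (metis dvd_mult int_dvd_int_iff of_nat_add)
  have "int (dual_pairing b (tent_matrix b C) j k' r) - int (dual_pairing b C j k r)
      = (\<Sum>i | digit b k' i \<noteq> 0. (int (tent_matrix b C j i r) - (int (C j (Suc i) r) - int (C j 0 r)))
            * int (digit b k' i))
        - int (C j 0 r) * (int c + int (delta b k'))"
    unfolding k digit_sum_mult_add[OF assms(1) c] delta_def
    by (simp add: of_nat_sum algebra_simps sum_subtractf sum.distrib sum_distrib_left)
  also have "int b dvd \<dots>"
    using assms(1) by (intro dvd_diff[OF dvd_sum row0] dvd_mult2 tent_matrix_dvd) simp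
  finally have "int (dual_pairing b (tent_matrix b C) j k' r) mod int b
      = int (dual_pairing b C j k r) mod int b"
    by (simp add: mod_eq_dvd_iff)
  then have "int (dual_pairing b (tent_matrix b C) j k' r mod b) = int (dual_pairing b C j k r mod b)"
    by (simp only: of_nat_mod)
  then show ?thesis by (simp only: k'_def of_nat_eq_iff)
qed

lemma dual_net_tent_matrix_iff:
  assumes "1 < b" "set k \<subseteq> Eset0 b"
  shows "map (\<lambda>x. x div b) k \<in> dual_net b m s (tent_matrix b C) \<longleftrightarrow> k \<in> dual_net b m s C"
proof (cases "length k = s")
  case True
  have "(\<Sum>j<s. dual_pairing b (tent_matrix b C) j (map (\<lambda>x. x div b) k ! j) r) mod b
      = (\<Sum>j<s. dual_pairing b C j (k ! j) r) mod b" for r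
  proof -
    have "(\<Sum>j<s. dual_pairing b (tent_matrix b C) j (map (\<lambda>x. x div b) k ! j) r mod b)
        = (\<Sum>j<s. dual_pairing b C j (k ! j) r mod b)"
    proof (rule sum.cong)
      fix j assume "j \<in> {..<s}"
      then have j: "j < length k" using True by simp
      then have "k ! j \<in> Eset0 b" using assms(2) by (meson nth_mem subsetD)
      then show "dual_pairing b (tent_matrix b C) j (map (\<lambda>x. x div b) k ! j) r mod b
          = dual_pairing b C j (k ! j) r mod b"
        using dual_pairing_tent_matrix[OF assms(1)] j by (simp only: nth_map)
    qed (rule refl)
    then have "(\<Sum>j<s. dual_pairing b (tent_matrix b C) j (map (\<lambda>x. x div b) k ! j) r mod b) mod b
        = (\<Sum>j<s. dual_pairing b C j (k ! j) r mod b) mod b" by (rule arg_cong)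
    then show ?thesis by (simp only: mod_sum_eq)
  qed
  then show ?thesis using True by (simp add: dual_net_def)
qed (simp add: dual_net_def)

text \<open>The residue c < b with c + delta x = 0 mod b, so that b x + c lies in E_0.\<close>
definition Eset0_lift :: "nat \<Rightarrow> nat \<Rightarrow> nat" where
  "Eset0_lift b x = b * x + (b - delta b x mod b) mod b"

lemma Eset0_lift_div: "0 < b \<Longrightarrow> Eset0_lift b x div b = x"
  by (simp add: Eset0_lift_def)

lemma Eset0_lift_mem:
  assumes "1 < b"
  shows "Eset0_lift b x \<in> Eset0 b"
proof -
  define d where "d = delta b x mod b"
  define c where "c = (b - d) mod b"
  have "d < b" "c < b" using assms by (simp_all add: d_def c_def)
  have "(c + delta b x) mod b = (c + d) mod b" by (simp add: d_def mod_add_right_eq)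
  also have "\<dots> = 0" using \<open>d < b\<close> by (cases "d = 0") (simp_all add: c_def)
  finally have "b dvd c + delta b x" by (simp only: dvd_eq_mod_eq_0)
  then show ?thesis
    using delta_mult_add[OF assms \<open>c < b\<close>, of x]
    by (simp add: Eset0_lift_def mem_Eset0_iff c_def d_def)
qed

lemma dual_net_tent_matrix:
  assumes "1 < b"
  shows "dual_net b m s (tent_matrix b C) =
           (\<lambda>k. map (\<lambda>x. x div b) k) ` ({k. length k = s \<and> set k \<subseteq> Eset0 b} \<inter> dual_net b m s C)"
proof (intro equalityI subsetI)
  fix k' assume k': "k' \<in> dual_net b m s (tent_matrix b C)"
  define k where "k = map (Eset0_lift b) k'"
  have E: "set k \<subseteq> Eset0 b" using Eset0_lift_mem[OF assms] by (auto simp: k_def)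
  have div: "map (\<lambda>x. x div b) k = k'" using assms by (simp add: k_def comp_def Eset0_lift_div)
  have "k \<in> dual_net b m s C" using dual_net_tent_matrix_iff[OF assms E] k' div by simp
  moreover have "length k = s" using k' by (simp add: k_def dual_net_def)
  ultimately show "k' \<in> (\<lambda>k. map (\<lambda>x. x div b) k) `
      ({k. length k = s \<and> set k \<subseteq> Eset0 b} \<inter> dual_net b m s C)"
    using E div by blast
next
  fix k' assume "k' \<in> (\<lambda>k. map (\<lambda>x. x div b) k) `
      ({k. length k = s \<and> set k \<subseteq> Eset0 b} \<inter> dual_net b m s C)"
  then show "k' \<in> dual_net b m s (tent_matrix b C)"
    using dual_net_tent_matrix_iff[OF assms] by blast
qed

theorem lemma3p3:
  fixes b s m :: nat and C :: "nat \<Rightarrow> nat \<Rightarrow> nat \<Rightarrow> nat"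
  assumes "b \<ge> 2" and "s \<ge> 1" and "m \<ge> 1"
    and "\<forall>j<s. \<forall>i r. C j i r < b"
  shows "\<exists>D :: nat \<Rightarrow> nat \<Rightarrow> nat \<Rightarrow> nat.
           (\<forall>j<s. \<forall>i r. D j i r < b) \<and>
           (\<forall>h<b ^ m. \<forall>j<s. tent b (net_point b m C h j) = net_point b m D h j) \<and>
           dual_net b m s D =
             (\<lambda>k. map (\<lambda>x. x div b) k) `
               ({k. length k = s \<and> set k \<subseteq> Eset0 b} \<inter> dual_net b m s C)"
proof (intro exI conjI)
  have b: "1 < b" using assms(1) by simp
  show "\<forall>j<s. \<forall>i r. tent_matrix b C j i r < b"
    using b by (simp add: tent_matrix_less)
  show "\<forall>h<b ^ m. \<forall>j<s. tent b (net_point b m C h j) = net_point b m (tent_matrix b C) h j"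
    using b by (simp add: net_point_tent_matrix)
  show "dual_net b m s (tent_matrix b C) =
      (\<lambda>k. map (\<lambda>x. x div b) k) ` ({k. length k = s \<and> set k \<subseteq> Eset0 b} \<inter> dual_net b m s C)"
    using dual_net_tent_matrix[OF b] .
qed

end
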